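(* Let $p>1$ and $\phi\in\mathcal A^p(M)$ with weak limit values $\phi_*$. If the measures $|\phi_j|^p\mu_j$ converge weak-* in $C(K)^*$ to a measure $\nu$ on $K$, then $\nu\ge|\phi_*|^p\mu$, i.e. $\nu(X)\ge\int_X|\phi_*|^p\,d\mu$ for every Borel set $X\subset K$.
   Context: $K$ is a compact metric space and $M=\{\mu_j\}_{j\ge1}$ is a sequence of finite positive regular Borel measures on $K$ converging weak-* in $C(K)^*$ (i.e. $\int h\,d\mu_j\to\int h\,d\mu$ for all $h\in C(K)$) to a finite positive Borel measure $\mu$. Write $K_j=\operatorname{supp}\mu_j$ and $K_0=\operatorname{supp}\mu$. A "sequence" $\phi=\{\phi_j\}$ means a sequence of real-valued Borel functions $\phi_j$ on $K_j$. For $p\ge 1$, $\|\phi\|_{L^p(M)}=\limsup_{j\to\infty}\|\phi_j\|_{L^p(K_j,\mu_j)}$. A sequence $\phi$ has weak limit values $\phi_*$ if $\phi_*$ is a $\mu$-integrable function on $K_0$ and $\int_{K_j}h\phi_j\,d\mu_j\to\int_{K_0}h\phi_*\,d\mu$ for every $h\in C(K)$. $\mathcal A(M)$ is the set of sequences having weak limit values, and $\mathcal A^p(M)$ the set of $\phi\in\mathcal A(M)$ with $\|\phi\|_{L^p(M)}<\infty$. *)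

theory Defs
  imports "HOL-Analysis.Analysis"
begin

definition borel_fin_measure_on :: "'a::metric_space set \<Rightarrow> 'a measure \<Rightarrow> bool" where
  "borel_fin_measure_on K \<mu> \<longleftrightarrow> sets \<mu> = sets (restrict_space borel K) \<and> finite_measure \<mu>"

definition msupp :: "'a::metric_space set \<Rightarrow> 'a measure \<Rightarrow> 'a set" where
  "msupp K \<mu> = {x \<in> K. \<forall>e>0. emeasure \<mu> (ball x e \<inter> K) > 0}"

definition weak_star_conv :: "'a::metric_space set \<Rightarrow> (nat \<Rightarrow> 'a measure) \<Rightarrow> 'a measure \<Rightarrow> bool" where
  "weak_star_conv K \<mu>s \<mu> \<longleftrightarrow>
     (\<forall>h::'a \<Rightarrow> real. continuous_on K h \<longrightarrow>
        (\<lambda>j. \<integral>x. h x \<partial>(\<mu>s j)) \<longlonglongrightarrow> (\<integral>x. h x \<partial>\<mu>))"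

definition Lp_norm_on :: "real \<Rightarrow> 'a measure \<Rightarrow> 'a set \<Rightarrow> ('a \<Rightarrow> real) \<Rightarrow> ereal" where
  "Lp_norm_on p \<mu> S f =
     (let I = (\<integral>\<^sup>+x\<in>S. ennreal (\<bar>f x\<bar> powr p) \<partial>\<mu>)
      in if I = \<infinity> then \<infinity> else ereal (enn2real I powr (1 / p)))"

definition Lp_seq_norm :: "real \<Rightarrow> 'a::metric_space set \<Rightarrow> (nat \<Rightarrow> 'a measure) \<Rightarrow> (nat \<Rightarrow> 'a \<Rightarrow> real) \<Rightarrow> ereal" where
  "Lp_seq_norm p K \<mu>s \<phi> = limsup (\<lambda>j. Lp_norm_on p (\<mu>s j) (msupp K (\<mu>s j)) (\<phi> j))"

definition has_weak_limit_values ::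
  "'a::metric_space set \<Rightarrow> (nat \<Rightarrow> 'a measure) \<Rightarrow> 'a measure \<Rightarrow> (nat \<Rightarrow> 'a \<Rightarrow> real) \<Rightarrow> ('a \<Rightarrow> real) \<Rightarrow> bool" where
  "has_weak_limit_values K \<mu>s \<mu> \<phi> \<phi>s \<longleftrightarrow>
     (\<forall>j. \<phi> j \<in> borel_measurable (restrict_space (\<mu>s j) (msupp K (\<mu>s j)))) \<and>
     \<phi>s \<in> borel_measurable (restrict_space \<mu> (msupp K \<mu>)) \<and>
     set_integrable \<mu> (msupp K \<mu>) \<phi>s \<and>
     (\<forall>h::'a \<Rightarrow> real. continuous_on K h \<longrightarrow>
        (\<lambda>j. \<integral>x\<in>msupp K (\<mu>s j). h x * \<phi> j x \<partial>(\<mu>s j)) \<longlonglongrightarrow> (\<integral>x\<in>msupp K \<mu>. h x * \<phi>s x \<partial>\<mu>))"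

end

theory Submission
  imports Defs
begin

(* Write psi = indicator(K0) * phis and psi_j = indicator(K_j) * phi_j for the extensions by
   zero.  For a continuous cut-off 0 <= h <= 1 and a constant c, Young's inequality
   c y <= |y|^p/p + |c|^q/q (1/p + 1/q = 1) integrated against h mu_j gives in the limit

       c * int h psi dmu  <=  (1/p) int h dnu + (1/q) |c|^q int h dmu.         (dual bound)

   Every Borel indicator is an a.e. limit (for mu and nu simultaneously) of continuous
   cut-offs, so the dual bound holds for indicators; summing over level sets it holds for
   simple functions c, and by dominated convergence for bounded measurable ones.  Testing
   with c = sgn psi * min(|psi|, n)^(p-1) on a Borel set Y yields
   int_Y min(|psi|, n)^p dmu <= nu(Y), and monotone convergence in n gives the theorem. *)

definition cont01 :: "('a::topological_space \<Rightarrow> real) \<Rightarrow> bool" where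
  "cont01 u \<longleftrightarrow> continuous_on UNIV u \<and> (\<forall>x. 0 \<le> u x \<and> u x \<le> 1)"

lemma cont01D:
  assumes "cont01 u"
  shows "u \<in> borel_measurable borel" "continuous_on K u" "0 \<le> u x" "u x \<le> 1"
  using assms unfolding cont01_def
  by (auto intro: borel_measurable_continuous_onI continuous_on_subset)

lemma cont01_dist_indicator:
  assumes "cont01 u" "A \<in> sets borel"
  shows "(\<lambda>x. \<bar>u x - indicator A x\<bar>) \<in> borel_measurable borel" "\<bar>\<bar>u x - indicator A x\<bar>\<bar> \<le> 1"
  using cont01D[OF assms(1)] assms(2) by (measurable, auto simp: indicator_def)

lemma borel_fin_measure_onD:
  assumes "borel_fin_measure_on K M"
  shows "sets M = sets (restrict_space borel K)" "finite_measure M" "space M = K"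
  using assms sets_eq_imp_space_eq[of M "restrict_space borel K"]
  unfolding borel_fin_measure_on_def by (auto simp: space_restrict_space)

lemma borel_fin_measure_on_measurable:
  assumes "borel_fin_measure_on K M" "f \<in> borel_measurable borel"
  shows "f \<in> borel_measurable M"
  using measurable_restrict_space1[OF assms(2), of K]
  by (subst measurable_cong_sets[OF borel_fin_measure_onD(1)[OF assms(1)] refl])

lemma borel_fin_measure_on_integrable:
  fixes f :: "'a::metric_space \<Rightarrow> real"
  assumes "borel_fin_measure_on K M" "f \<in> borel_measurable borel" "\<And>x. \<bar>f x\<bar> \<le> B"
  shows "integrable M f"
  using finite_measure.integrable_const_bound[OF borel_fin_measure_onD(2)[OF assms(1)], of f B]
    borel_fin_measure_on_measurable[OF assms(1,2)] assms(3)
  by auto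

lemma borel_fin_measure_on_integral_tendsto_zero:
  fixes f :: "nat \<Rightarrow> 'a::metric_space \<Rightarrow> real"
  assumes "borel_fin_measure_on K M" "\<And>n. f n \<in> borel_measurable borel"
    and "\<And>n x. \<bar>f n x\<bar> \<le> 1" "\<And>x. (\<lambda>n. f n x) \<longlonglongrightarrow> 0"
  shows "(\<lambda>n. \<integral>x. f n x \<partial>M) \<longlonglongrightarrow> 0"
proof -
  have "(\<lambda>n. \<integral>x. f n x \<partial>M) \<longlonglongrightarrow> (\<integral>x. 0 \<partial>M)"
    using assms borel_fin_measure_on_measurable[OF assms(1,2)]
      finite_measure.integrable_const[OF borel_fin_measure_onD(2)[OF assms(1)]]
    by (intro integral_dominated_convergence[where w="\<lambda>x. 1"]) auto
  then show ?thesis by simp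
qed

lemma integral_cont01_tendsto_indicator:
  assumes "borel_fin_measure_on K L" "Y \<in> sets borel" "\<And>n. cont01 (u n)"
    and "AE x in L. (\<lambda>n. u n x) \<longlonglongrightarrow> indicator Y x"
  shows "(\<lambda>n. \<integral>x. u n x \<partial>L) \<longlonglongrightarrow> (\<integral>x. indicator Y x \<partial>L)"
proof (rule integral_dominated_convergence[where w="\<lambda>x. 1"])
  show "(indicator Y :: 'a \<Rightarrow> real) \<in> borel_measurable L"
    using borel_fin_measure_on_measurable[OF assms(1), of "indicator Y"] assms(2) by simp
  show "u n \<in> borel_measurable L" for n
    using borel_fin_measure_on_measurable[OF assms(1) cont01D(1)[OF assms(3)]] .
  show "integrable L (\<lambda>x. 1::real)"
    using finite_measure.integrable_const[OF borel_fin_measure_onD(2)[OF assms(1)]] .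
  show "AE x in L. norm (u n x) \<le> 1" for n
    using cont01D(3,4)[OF assms(3)] by (intro AE_I2) auto
qed (rule assms(4))

lemma integral_indicator_level_sets:
  fixes g :: "'a \<Rightarrow> real" and F :: "real \<Rightarrow> 'a \<Rightarrow> real"
  assumes "space M = K" "finite (g ` K)"
    and "\<And>v. v \<in> g ` K \<Longrightarrow> integrable M (\<lambda>x. indicator (Y \<inter> g -` {v} \<inter> K) x * F v x)"
  shows "(\<integral>x. indicator Y x * F (g x) x \<partial>M)
       = (\<Sum>v\<in>g ` K. \<integral>x. indicator (Y \<inter> g -` {v} \<inter> K) x * F v x \<partial>M)"
proof -
  have "indicator Y x * F (g x) x = (\<Sum>v\<in>g ` K. indicator (Y \<inter> g -` {v} \<inter> K) x * F v x)"
    if "x \<in> space M" for x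
  proof -
    have "(\<Sum>v\<in>g ` K. indicator (Y \<inter> g -` {v} \<inter> K) x * F v x)
        = (\<Sum>v\<in>g ` K. if v = g x then indicator Y x * F v x else 0)"
      using that assms(1) by (intro sum.cong) (auto simp: indicator_def)
    also have "\<dots> = indicator Y x * F (g x) x"
      using that assms(1,2) by (simp add: sum.delta')
    finally show ?thesis by simp
  qed
  then have "(\<integral>x. indicator Y x * F (g x) x \<partial>M)
      = (\<integral>x. (\<Sum>v\<in>g ` K. indicator (Y \<inter> g -` {v} \<inter> K) x * F v x) \<partial>M)"
    by (rule Bochner_Integration.integral_cong[OF refl])
  also have "\<dots> = (\<Sum>v\<in>g ` K. \<integral>x. indicator (Y \<inter> g -` {v} \<inter> K) x * F v x \<partial>M)"
    using assms(3) by (rule Bochner_Integration.integral_sum)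
  finally show ?thesis .
qed

text \<open>A set is \<open>cont_approximable\<close> if its indicator
  is approximated by continuous cut-offs in \<open>L\<^sup>1(M)\<close> and \<open>L\<^sup>1(N)\<close> simultaneously; every Borel
  set has this property, which is what allows passing from continuous test functions to
  indicators in the dual bound.\<close>
locale two_borel_measures =
  fixes K :: "'a::metric_space set" and M N :: "'a measure"
  assumes M: "borel_fin_measure_on K M" and N: "borel_fin_measure_on K N"
begin

definition both_integral :: "('a \<Rightarrow> real) \<Rightarrow> real" where
  "both_integral f = (\<integral>x. f x \<partial>M) + (\<integral>x. f x \<partial>N)"

definition cont_approximable :: "'a set \<Rightarrow> bool" where
  "cont_approximable A \<longleftrightarrow>
     (\<forall>e>0. \<exists>u. cont01 u \<and> both_integral (\<lambda>x. \<bar>u x - indicator A x\<bar>) < e)"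

lemma integrable_both:
  fixes f :: "'a \<Rightarrow> real"
  assumes "f \<in> borel_measurable borel" "\<And>x. \<bar>f x\<bar> \<le> B"
  shows "integrable M f" "integrable N f"
  using borel_fin_measure_on_integrable[OF M assms] borel_fin_measure_on_integrable[OF N assms]
  by auto

lemma both_integral_subadditive:
  fixes f g h :: "'a \<Rightarrow> real"
  assumes "f \<in> borel_measurable borel" "g \<in> borel_measurable borel" "h \<in> borel_measurable borel"
    and "\<And>x. \<bar>f x\<bar> \<le> B" "\<And>x. \<bar>g x\<bar> \<le> B" "\<And>x. \<bar>h x\<bar> \<le> B" "\<And>x. h x \<le> f x + g x"
  shows "both_integral h \<le> both_integral f + both_integral g"
proof -
  have "(\<integral>x. h x \<partial>L) \<le> (\<integral>x. f x \<partial>L) + (\<integral>x. g x \<partial>L)"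
    if "integrable L f" "integrable L g" "integrable L h" for L
    using integral_mono[OF that(3) _ assms(7)] that by (simp add: Bochner_Integration.integral_add)
  from this[OF integrable_both(1)[OF assms(1,4)] integrable_both(1)[OF assms(2,5)] integrable_both(1)[OF assms(3,6)]]
    this[OF integrable_both(2)[OF assms(1,4)] integrable_both(2)[OF assms(2,5)] integrable_both(2)[OF assms(3,6)]]
  show ?thesis
    unfolding both_integral_def by linarith
qed

lemma both_integral_tendsto_zero:
  assumes "\<And>n. f n \<in> borel_measurable borel" "\<And>n x. \<bar>f n x\<bar> \<le> 1" "\<And>x. (\<lambda>n. f n x) \<longlonglongrightarrow> 0"
  shows "(\<lambda>n. both_integral (f n)) \<longlonglongrightarrow> 0"
  using tendsto_add[OF borel_fin_measure_on_integral_tendsto_zero[OF M assms]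
      borel_fin_measure_on_integral_tendsto_zero[OF N assms]]
  unfolding both_integral_def by simp

lemma cont_approximable_of_tendsto:
  assumes "A \<in> sets borel" "\<And>n. cont01 (u n)" "\<And>x. (\<lambda>n. u n x) \<longlonglongrightarrow> indicator A x"
  shows "cont_approximable A"
  unfolding cont_approximable_def
proof (intro allI impI)
  fix e :: real assume "e > 0"
  have "(\<lambda>n. \<bar>u n x - indicator A x\<bar>) \<longlonglongrightarrow> 0" for x
    using tendsto_rabs_zero[OF LIM_zero[OF assms(3)]] .
  then have "(\<lambda>n. both_integral (\<lambda>x. \<bar>u n x - indicator A x\<bar>)) \<longlonglongrightarrow> 0"
    by (intro both_integral_tendsto_zero cont01_dist_indicator[OF assms(2) assms(1)])
  from order_tendstoD(2)[OF this \<open>e > 0\<close>]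
  obtain n where "both_integral (\<lambda>x. \<bar>u n x - indicator A x\<bar>) < e"
    by (auto simp: eventually_sequentially)
  then show "\<exists>u. cont01 u \<and> both_integral (\<lambda>x. \<bar>u x - indicator A x\<bar>) < e"
    using assms(2) by blast
qed

text \<open>Closed sets: the Urysohn-type cut-offs \<open>max 0 (1 - n \<cdot> infdist x A)\<close> decrease to \<open>indicator A\<close>.\<close>
lemma cont_approximable_closed:
  assumes "closed A"
  shows "cont_approximable A"
proof (cases "A = {}")
  case True
  have "cont01 (\<lambda>x. 0)" by (simp add: cont01_def)
  then show ?thesis
    using True by (auto simp: cont_approximable_def both_integral_def)
next
  case False
  define u where "u n x = max 0 (1 - real n * infdist x A)" for n x
  have "cont01 (u n)" for n
    unfolding cont01_def u_def by (auto intro!: continuous_intros simp: infdist_nonneg)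
  moreover have "(\<lambda>n. u n x) \<longlonglongrightarrow> indicator A x" for x
  proof (cases "x \<in> A")
    case True
    then show ?thesis by (simp add: u_def)
  next
    case False
    then have "infdist x A > 0"
      using in_closed_iff_infdist_zero[OF assms \<open>A \<noteq> {}\<close>] infdist_nonneg[of x A] by auto
    then obtain n0 where "1 < real n0 * infdist x A"
      using ex_less_of_nat_mult by blast
    moreover have "real n0 * infdist x A \<le> real n * infdist x A" if "n0 \<le> n" for n
      using that \<open>infdist x A > 0\<close> by (intro mult_right_mono) auto
    ultimately have "u n x = 0" if "n0 \<le> n" for n
      using that unfolding u_def by fastforce
    then show ?thesis
      using False by (intro tendsto_eventually) (auto simp: eventually_sequentially)
  qed
  ultimately show ?thesis
    using assms by (intro cont_approximable_of_tendsto) auto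
qed

text \<open>Complements: \<open>1 - u\<close> approximates the complement as well as \<open>u\<close> approximates the set.\<close>
lemma cont_approximable_Compl:
  assumes "cont_approximable A"
  shows "cont_approximable (UNIV - A)"
  unfolding cont_approximable_def
proof (intro allI impI)
  fix e :: real assume "e > 0"
  then obtain u where u: "cont01 u" "both_integral (\<lambda>x. \<bar>u x - indicator A x\<bar>) < e"
    using assms unfolding cont_approximable_def by blast
  have "cont01 (\<lambda>x. 1 - u x)"
    using u(1) unfolding cont01_def by (auto intro!: continuous_intros)
  moreover have "\<bar>1 - u x - indicator (UNIV - A) x\<bar> = \<bar>u x - indicator A x\<bar>" for x
    by (cases "x \<in> A") auto
  ultimately show "\<exists>u. cont01 u \<and> both_integral (\<lambda>x. \<bar>u x - indicator (UNIV - A) x\<bar>) < e"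
    using u(2) by (intro exI[of _ "\<lambda>x. 1 - u x"]) simp
qed

text \<open>Unions: the maximum of the two approximants approximates the union.\<close>
lemma cont_approximable_Un:
  assumes "A \<in> sets borel" "B \<in> sets borel" "cont_approximable A" "cont_approximable B"
  shows "cont_approximable (A \<union> B)"
  unfolding cont_approximable_def
proof (intro allI impI)
  fix e :: real assume "e > 0"
  obtain u where u: "cont01 u" "both_integral (\<lambda>x. \<bar>u x - indicator A x\<bar>) < e/2"
    using assms(3) \<open>e > 0\<close> unfolding cont_approximable_def by (meson half_gt_zero)
  obtain v where v: "cont01 v" "both_integral (\<lambda>x. \<bar>v x - indicator B x\<bar>) < e/2"
    using assms(4) \<open>e > 0\<close> unfolding cont_approximable_def by (meson half_gt_zero)
  have w: "cont01 (\<lambda>x. max (u x) (v x))"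
    using u(1) v(1) unfolding cont01_def by (auto intro!: continuous_intros simp: le_max_iff_disj)
  have "both_integral (\<lambda>x. \<bar>max (u x) (v x) - indicator (A \<union> B) x\<bar>)
      \<le> both_integral (\<lambda>x. \<bar>u x - indicator A x\<bar>) + both_integral (\<lambda>x. \<bar>v x - indicator B x\<bar>)"
  proof (rule both_integral_subadditive)
    show "\<bar>max (u x) (v x) - indicator (A \<union> B) x\<bar> \<le> \<bar>u x - indicator A x\<bar> + \<bar>v x - indicator B x\<bar>" for x
      using cont01D(3,4)[OF u(1), of x] cont01D(3,4)[OF v(1), of x]
      by (auto simp: indicator_def)
  qed (use cont01_dist_indicator[OF u(1) assms(1)] cont01_dist_indicator[OF v(1) assms(2)]
      cont01_dist_indicator[OF w] assms(1,2) in auto)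
  then show "\<exists>u. cont01 u \<and> both_integral (\<lambda>x. \<bar>u x - indicator (A \<union> B) x\<bar>) < e"
    using w u(2) v(2) by (intro exI[of _ "\<lambda>x. max (u x) (v x)"]) auto
qed

lemma cont_approximable_limit:
  assumes "A \<in> sets borel" "\<And>n. B n \<in> sets borel" "\<And>n. cont_approximable (B n)"
    and "\<And>x. (\<lambda>n. indicator (B n) x :: real) \<longlonglongrightarrow> indicator A x"
  shows "cont_approximable A"
  unfolding cont_approximable_def
proof (intro allI impI)
  fix e :: real assume "e > 0"
  define d where "d n x = \<bar>indicator (B n) x - indicator A x :: real\<bar>" for n x
  have d_meas: "d n \<in> borel_measurable borel" and d_bound: "\<bar>d n x\<bar> \<le> 1" for n x
    unfolding d_def using assms(1,2) by (measurable, auto simp: indicator_def)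
  have "(\<lambda>n. d n x) \<longlonglongrightarrow> 0" for x
    unfolding d_def using tendsto_rabs_zero[OF LIM_zero[OF assms(4)]] .
  then have "(\<lambda>n. both_integral (d n)) \<longlonglongrightarrow> 0"
    by (intro both_integral_tendsto_zero d_meas d_bound)
  from order_tendstoD(2)[OF this half_gt_zero[OF \<open>e > 0\<close>]]
  obtain n where n: "both_integral (d n) < e/2"
    by (auto simp: eventually_sequentially)
  obtain u where u: "cont01 u" "both_integral (\<lambda>x. \<bar>u x - indicator (B n) x\<bar>) < e/2"
    using assms(3) \<open>e > 0\<close> unfolding cont_approximable_def by (meson half_gt_zero)
  have "both_integral (\<lambda>x. \<bar>u x - indicator A x\<bar>)
      \<le> both_integral (\<lambda>x. \<bar>u x - indicator (B n) x\<bar>) + both_integral (d n)"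
  proof (rule both_integral_subadditive)
    show "\<bar>u x - indicator A x\<bar> \<le> \<bar>u x - indicator (B n) x\<bar> + d n x" for x
      unfolding d_def by linarith
  qed (use cont01_dist_indicator[OF u(1) assms(2)] cont01_dist_indicator[OF u(1) assms(1)]
      d_meas d_bound in auto)
  then show "\<exists>u. cont01 u \<and> both_integral (\<lambda>x. \<bar>u x - indicator A x\<bar>) < e"
    using u n by (intro exI[of _ u]) auto
qed

text \<open>Every Borel set is approximable: the approximable Borel sets form a
  \<open>\<sigma>\<close>-algebra containing the closed sets.\<close>
lemma cont_approximable_borel:
  assumes "A \<in> sets borel"
  shows "cont_approximable A"
proof -
  have "A \<in> sigma_sets UNIV (Collect closed)"
    using assms unfolding borel_eq_closed by (simp add: sets_measure_of)
  then show ?thesis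
  proof (induction rule: sigma_sets.induct)
    case (Basic a)
    then show ?case by (simp add: cont_approximable_closed)
  next
    case Empty
    then show ?case by (simp add: cont_approximable_closed)
  next
    case (Compl a)
    then show ?case by (simp add: cont_approximable_Compl)
  next
    case (Union a)
    have a_borel: "a i \<in> sets borel" for i
      using Union(1)[of i] unfolding borel_eq_closed by (simp add: sets_measure_of)
    have "cont_approximable (\<Union>i<n. a i)" for n
    proof (induction n)
      case 0
      then show ?case by (simp add: cont_approximable_closed)
    next
      case (Suc n)
      then show ?case
        using cont_approximable_Un[OF a_borel _ Union(2) Suc, of n] a_borel
        by (simp add: lessThan_Suc Un_commute)
    qed
    then show ?case
      using a_borel by (intro cont_approximable_limit[OF _ _ _ LIMSEQ_indicator_UN]) auto
  qed
qed

lemma both_integral_ge: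
  assumes "\<And>x. 0 \<le> f x"
  shows "(\<integral>x. f x \<partial>M) \<le> both_integral f" "(\<integral>x. f x \<partial>N) \<le> both_integral f"
  unfolding both_integral_def using assms by auto

text \<open>Every Borel indicator is the a.e. limit, for both measures simultaneously, of a sequence
  of continuous cut-offs: take approximants with error \<open>1/(n+1)\<close> and pass twice to an
  a.e. convergent subsequence.\<close>
lemma indicator_AE_approx:
  assumes "A \<in> sets borel"
  obtains u where "\<And>n. cont01 (u n)"
    "AE x in M. (\<lambda>n. u n x) \<longlonglongrightarrow> indicator A x" "AE x in N. (\<lambda>n. u n x) \<longlonglongrightarrow> indicator A x"
proof -
  have "\<forall>n. \<exists>u. cont01 u \<and> both_integral (\<lambda>x. \<bar>u x - indicator A x\<bar>) < inverse (real (Suc n))"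
    using cont_approximable_borel[OF assms] unfolding cont_approximable_def by simp
  then obtain h where h: "\<And>n. cont01 (h n)"
    and h_err: "\<And>n. both_integral (\<lambda>x. \<bar>h n x - indicator A x\<bar>) < inverse (real (Suc n))"
    by metis
  define d where "d n x = h n x - indicator A x" for n x
  have d_meas: "d n \<in> borel_measurable borel" and d_bound: "\<bar>d n x\<bar> \<le> 1" for n x
    unfolding d_def using cont01D[OF h(1)] assms by (measurable, auto simp: indicator_def)
  have err_M: "(\<integral>x. \<bar>d n x\<bar> \<partial>M) \<le> both_integral (\<lambda>x. \<bar>d n x\<bar>)"
    and err_N: "(\<integral>x. \<bar>d n x\<bar> \<partial>N) \<le> both_integral (\<lambda>x. \<bar>d n x\<bar>)" for n
    by (rule both_integral_ge; simp)+
  have L1_conv: "(\<lambda>n. \<integral>x. norm (d n x) \<partial>L) \<longlonglongrightarrow> 0"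
    if "\<And>n. (\<integral>x. \<bar>d n x\<bar> \<partial>L) \<le> both_integral (\<lambda>x. \<bar>d n x\<bar>)" for L
  proof (rule tendsto_sandwich[OF _ _ tendsto_const LIMSEQ_inverse_real_of_nat])
    have "(\<integral>x. norm (d n x) \<partial>L) \<le> inverse (real (Suc n))" for n
      using that[of n] h_err[of n] unfolding d_def real_norm_def by linarith
    then show "\<forall>\<^sub>F n in sequentially. (\<integral>x. norm (d n x) \<partial>L) \<le> inverse (real (Suc n))"
      by (simp add: always_eventually)
  qed simp
  obtain r where r: "strict_mono r" "AE x in M. (\<lambda>n. d (r n) x) \<longlonglongrightarrow> 0"
    using tendsto_L1_AE_subseq[OF integrable_both(1)[OF d_meas d_bound] L1_conv[OF err_M]] by blast
  have "(\<lambda>n. \<integral>x. norm (d (r n) x) \<partial>N) \<longlonglongrightarrow> 0"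
    using LIMSEQ_subseq_LIMSEQ[OF L1_conv[OF err_N] r(1)] by (simp add: o_def)
  then obtain s where s: "strict_mono s" "AE x in N. (\<lambda>n. d (r (s n)) x) \<longlonglongrightarrow> 0"
    using tendsto_L1_AE_subseq[OF integrable_both(2)[OF d_meas d_bound]] by blast
  have "AE x in M. (\<lambda>n. d (r (s n)) x) \<longlonglongrightarrow> 0"
    using r(2) by eventually_elim (drule LIMSEQ_subseq_LIMSEQ[OF _ s(1)], simp add: o_def)
  with s(2) show ?thesis
    by (intro that[of "\<lambda>n. h (r (s n))"] h) (simp_all add: d_def LIM_zero_iff)
qed

end

text \<open>The test function \<open>sgn y \<cdot> min |y| n^(p-1)\<close> used to recover \<open>min |y| n ^ p\<close>: it is
  dominated by \<open>y\<close> in the pairing, and its \<open>q\<close>-th power is exactly \<open>min |y| n ^ p\<close>.\<close>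
lemma truncated_power_le_pairing:
  fixes y n p :: real
  assumes "1 < p" "0 \<le> n"
  shows "min \<bar>y\<bar> n powr p \<le> (sgn y * min \<bar>y\<bar> n powr (p - 1)) * y"
proof -
  define m where "m = min \<bar>y\<bar> n"
  have m: "0 \<le> m" "m \<le> \<bar>y\<bar>"
    using assms unfolding m_def by auto
  have "m powr p = m * m powr (p - 1)"
    using m(1) powr_add[of m 1 "p - 1"] by (cases "m = 0") auto
  also have "\<dots> \<le> \<bar>y\<bar> * m powr (p - 1)"
    using m by (intro mult_right_mono) auto
  also have "\<dots> = (sgn y * m powr (p - 1)) * y"
    by (metis abs_sgn mult.commute mult.left_commute)
  finally show ?thesis unfolding m_def .
qed

lemma truncated_power_conjugate:
  fixes y n p q :: real
  assumes "0 \<le> n" "(p - 1) * q = p"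
  shows "\<bar>sgn y * min \<bar>y\<bar> n powr (p - 1)\<bar> powr q = min \<bar>y\<bar> n powr p"
proof (cases "y = 0")
  case True
  then show ?thesis using assms(1) by simp
next
  case False
  then have "\<bar>sgn y * min \<bar>y\<bar> n powr (p - 1)\<bar> = min \<bar>y\<bar> n powr (p - 1)"
    by (simp add: abs_mult)
  then show ?thesis using assms(2) by (simp add: powr_powr)
qed

locale dual_Young_bound = two_borel_measures K \<mu> \<nu>
  for K :: "'a::metric_space set" and \<mu> \<nu> :: "'a measure" +
  fixes \<psi> :: "'a \<Rightarrow> real" and p q :: real
  assumes K_borel: "K \<in> sets borel" and p_gt_1: "1 < p" and conjugate: "1/p + 1/q = 1"
    and \<psi>_integrable: "integrable \<mu> \<psi>"
    and cont_bound: "\<And>h c. cont01 h \<Longrightarrow>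
       c * (\<integral>x. h x * \<psi> x \<partial>\<mu>) \<le> 1/p * (\<integral>x. h x \<partial>\<nu>) + 1/q * \<bar>c\<bar> powr q * (\<integral>x. h x \<partial>\<mu>)"
begin

lemma q_eq: "q = p / (p - 1)"
proof -
  have "q \<noteq> 0"
    using conjugate p_gt_1 by auto
  then show ?thesis
    using conjugate p_gt_1 by (auto simp: field_simps)
qed

lemma q_gt_1: "1 < q" and p_minus_1_q: "(p - 1) * q = p"
  using p_gt_1 by (simp_all add: q_eq field_simps)

lemma \<psi>_measurable: "\<psi> \<in> borel_measurable \<mu>"
  using \<psi>_integrable by (rule borel_measurable_integrable)

lemma space_\<mu>: "space \<mu> = K" and space_\<nu>: "space \<nu> = K"
  using borel_fin_measure_onD(3)[OF M] borel_fin_measure_onD(3)[OF N] by simp_all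

lemma indicator_measurable:
  "Y \<in> sets borel \<Longrightarrow> (indicator Y :: 'a \<Rightarrow> real) \<in> borel_measurable \<mu>"
  using borel_fin_measure_on_measurable[OF M, of "indicator Y"] by simp

lemma indicator_bound:
  assumes Y: "Y \<in> sets borel"
  shows "c * (\<integral>x. indicator Y x * \<psi> x \<partial>\<mu>)
       \<le> 1/p * (\<integral>x. indicator Y x \<partial>\<nu>) + 1/q * \<bar>c\<bar> powr q * (\<integral>x. indicator Y x \<partial>\<mu>)"
proof -
  obtain u where u: "\<And>n. cont01 (u n)" and
    u_\<mu>: "AE x in \<mu>. (\<lambda>n. u n x) \<longlonglongrightarrow> indicator Y x" and
    u_\<nu>: "AE x in \<nu>. (\<lambda>n. u n x) \<longlonglongrightarrow> indicator Y x"
    using indicator_AE_approx[OF Y] by blast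
  have "(\<lambda>n. c * (\<integral>x. u n x * \<psi> x \<partial>\<mu>)) \<longlonglongrightarrow> c * (\<integral>x. indicator Y x * \<psi> x \<partial>\<mu>)"
  proof (intro tendsto_mult_left integral_dominated_convergence[where w="\<lambda>x. \<bar>\<psi> x\<bar>"])
    show "(\<lambda>x. indicator Y x * \<psi> x) \<in> borel_measurable \<mu>"
      using indicator_measurable[OF Y] \<psi>_measurable by measurable
    show "(\<lambda>x. u n x * \<psi> x) \<in> borel_measurable \<mu>" for n
      using borel_fin_measure_on_measurable[OF M cont01D(1)[OF u]] \<psi>_measurable by measurable
    show "AE x in \<mu>. (\<lambda>n. u n x * \<psi> x) \<longlonglongrightarrow> indicator Y x * \<psi> x"
      using u_\<mu> by eventually_elim (rule tendsto_mult_right)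
    show "AE x in \<mu>. norm (u n x * \<psi> x) \<le> \<bar>\<psi> x\<bar>" for n
      using cont01D(3,4)[OF u] by (intro AE_I2) (auto simp: abs_mult intro!: mult_left_le_one_le)
  qed (use \<psi>_integrable in auto)
  moreover have "(\<lambda>n. 1/p * (\<integral>x. u n x \<partial>\<nu>) + 1/q * \<bar>c\<bar> powr q * (\<integral>x. u n x \<partial>\<mu>))
      \<longlonglongrightarrow> 1/p * (\<integral>x. indicator Y x \<partial>\<nu>) + 1/q * \<bar>c\<bar> powr q * (\<integral>x. indicator Y x \<partial>\<mu>)"
    by (intro tendsto_add tendsto_mult_left integral_cont01_tendsto_indicator[OF N Y u u_\<nu>]
        integral_cont01_tendsto_indicator[OF M Y u u_\<mu>])
  ultimately show ?thesis
    using cont_bound[OF u] by (intro tendsto_le[OF sequentially_bot]) auto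
qed

lemma integrable_indicator_mult_const:
  assumes "Y \<in> sets borel" "borel_fin_measure_on K L"
  shows "integrable L (\<lambda>x. indicator Y x * a :: real)"
  using assms by (intro borel_fin_measure_on_integrable[of _ _ _ "\<bar>a\<bar>"]) (auto simp: indicator_def)

text \<open>By linearity, it extends to simple functions: split \<open>Y\<close> into level sets of \<open>g\<close>.\<close>
lemma simple_bound:
  assumes g: "simple_function (restrict_space borel K) g" and Y: "Y \<in> sets borel"
  shows "(\<integral>x. indicator Y x * (g x * \<psi> x) \<partial>\<mu>)
       \<le> 1/p * (\<integral>x. indicator Y x \<partial>\<nu>) + 1/q * (\<integral>x. indicator Y x * \<bar>g x\<bar> powr q \<partial>\<mu>)"
proof -
  define V where "V = g ` K"
  define Yv where "Yv v = Y \<inter> g -` {v} \<inter> K" for v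
  have finV: "finite V"
    using g unfolding simple_function_def V_def by (simp add: space_restrict_space)
  have Yv_borel: "Yv v \<in> sets borel" for v
  proof -
    have "g -` {v} \<inter> K \<in> sets (restrict_space borel K)"
      using simple_functionD(2)[OF g, of "{v}"] by (simp add: space_restrict_space)
    then show ?thesis
      unfolding Yv_def using Y sets_restrict_space_iff[of K borel] K_borel by (auto simp: Int_assoc)
  qed
  have \<mu>_int: "integrable \<mu> (\<lambda>x. indicator (Yv v) x * \<psi> x)" for v
  proof (rule Bochner_Integration.integrable_bound[OF \<psi>_integrable])
    show "(\<lambda>x. indicator (Yv v) x * \<psi> x) \<in> borel_measurable \<mu>"
      using indicator_measurable[OF Yv_borel] \<psi>_measurable by measurable
  qed (auto simp: indicator_def)
  have "(\<integral>x. indicator Y x * (g x * \<psi> x) \<partial>\<mu>) = (\<Sum>v\<in>V. \<integral>x. indicator (Yv v) x * (v * \<psi> x) \<partial>\<mu>)"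
    unfolding V_def Yv_def
    by (rule integral_indicator_level_sets[where F="\<lambda>v x. v * \<psi> x"])
      (use space_\<mu> finV \<mu>_int in \<open>auto simp: V_def Yv_def mult_ac\<close>)
  also have "\<dots> = (\<Sum>v\<in>V. v * (\<integral>x. indicator (Yv v) x * \<psi> x \<partial>\<mu>))"
    by (intro sum.cong refl) (simp add: mult_ac flip: integral_mult_right_zero)
  also have "\<dots> \<le> (\<Sum>v\<in>V. 1/p * (\<integral>x. indicator (Yv v) x * 1 \<partial>\<nu>)
                      + 1/q * (\<integral>x. indicator (Yv v) x * \<bar>v\<bar> powr q \<partial>\<mu>))"
    using indicator_bound[OF Yv_borel] by (intro sum_mono) (simp add: mult_ac)
  also have "\<dots> = 1/p * (\<Sum>v\<in>V. \<integral>x. indicator (Yv v) x * 1 \<partial>\<nu>)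
                 + 1/q * (\<Sum>v\<in>V. \<integral>x. indicator (Yv v) x * \<bar>v\<bar> powr q \<partial>\<mu>)"
    by (simp add: sum.distrib sum_distrib_left del: mult_1_right)
  also have "(\<Sum>v\<in>V. \<integral>x. indicator (Yv v) x * 1 \<partial>\<nu>) = (\<integral>x. indicator Y x * 1 \<partial>\<nu> :: real)"
    unfolding V_def Yv_def
    by (rule integral_indicator_level_sets[where F="\<lambda>v x. 1", symmetric])
      (use space_\<nu> finV integrable_indicator_mult_const[OF Yv_borel N] in \<open>auto simp: V_def Yv_def\<close>)
  also have "(\<Sum>v\<in>V. \<integral>x. indicator (Yv v) x * \<bar>v\<bar> powr q \<partial>\<mu>) = (\<integral>x. indicator Y x * \<bar>g x\<bar> powr q \<partial>\<mu>)"
    unfolding V_def Yv_def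
    by (rule integral_indicator_level_sets[where F="\<lambda>v x. \<bar>v\<bar> powr q", symmetric])
      (use space_\<mu> finV integrable_indicator_mult_const[OF Yv_borel M] in \<open>auto simp: V_def Yv_def\<close>)
  finally show ?thesis by simp
qed

text \<open>Bounded measurable \<open>g\<close> are pointwise limits of uniformly bounded simple functions, so
  dominated convergence carries the bound from simple to bounded measurable functions.\<close>
lemma bounded_bound:
  assumes g: "g \<in> borel_measurable \<mu>" and g_bound: "\<And>x. \<bar>g x\<bar> \<le> B" and Y: "Y \<in> sets borel"
  shows "(\<integral>x. indicator Y x * (g x * \<psi> x) \<partial>\<mu>)
       \<le> 1/p * (\<integral>x. indicator Y x \<partial>\<nu>) + 1/q * (\<integral>x. indicator Y x * \<bar>g x\<bar> powr q \<partial>\<mu>)"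
proof -
  have g_K: "g \<in> borel_measurable (restrict_space borel K)"
    using g by (subst (asm) measurable_cong_sets[OF borel_fin_measure_onD(1)[OF M] refl])
  obtain s where s: "\<And>i. simple_function (restrict_space borel K) (s i)"
    and s_lim: "\<And>x. x \<in> K \<Longrightarrow> (\<lambda>i. s i x) \<longlonglongrightarrow> g x"
    and s_le: "\<And>i x. x \<in> K \<Longrightarrow> dist (s i x) 0 \<le> 2 * dist (g x) 0"
    using borel_measurable_implies_sequence_metric[OF g_K, of 0]
    by (metis space_restrict_space2 K_borel sets.top)
  have s_meas: "s i \<in> borel_measurable \<mu>" for i
    using borel_measurable_simple_function[OF s]
    by (subst measurable_cong_sets[OF borel_fin_measure_onD(1)[OF M] refl])
  have s_bound: "\<bar>s i x\<bar> \<le> 2 * B" if "x \<in> space \<mu>" for i x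
    using s_le[of x i] that g_bound[of x] space_\<mu> by simp
  have Y_meas: "(indicator Y :: 'a \<Rightarrow> real) \<in> borel_measurable \<mu>"
    using indicator_measurable[OF Y] .
  have "0 \<le> B"
    using g_bound[of undefined] by linarith
  have "(\<lambda>i. \<integral>x. indicator Y x * (s i x * \<psi> x) \<partial>\<mu>) \<longlonglongrightarrow> (\<integral>x. indicator Y x * (g x * \<psi> x) \<partial>\<mu>)"
  proof (rule integral_dominated_convergence[where w="\<lambda>x. 2 * B * \<bar>\<psi> x\<bar>"])
    show "AE x in \<mu>. norm (indicator Y x * (s i x * \<psi> x)) \<le> 2 * B * \<bar>\<psi> x\<bar>" for i
      using s_bound \<open>0 \<le> B\<close> by (intro AE_I2)
        (auto simp: indicator_def abs_mult intro!: mult_right_mono)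
  qed (use Y_meas s_meas g \<psi>_measurable \<psi>_integrable s_lim space_\<mu> in
      \<open>auto intro!: AE_I2 tendsto_intros\<close>)
  moreover have "(\<lambda>i. \<integral>x. indicator Y x * \<bar>s i x\<bar> powr q \<partial>\<mu>)
      \<longlonglongrightarrow> (\<integral>x. indicator Y x * \<bar>g x\<bar> powr q \<partial>\<mu>)"
  proof (rule integral_dominated_convergence[where w="\<lambda>x. (2 * B) powr q"])
    show "AE x in \<mu>. norm (indicator Y x * \<bar>s i x\<bar> powr q) \<le> (2 * B) powr q" for i
      using s_bound q_gt_1 by (intro AE_I2) (auto simp: indicator_def intro!: powr_mono2)
    show "AE x in \<mu>. (\<lambda>i. indicator Y x * \<bar>s i x\<bar> powr q) \<longlonglongrightarrow> indicator Y x * \<bar>g x\<bar> powr q"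
      using s_lim space_\<mu> q_gt_1 by (intro AE_I2 tendsto_mult_left tendsto_powr' tendsto_rabs) auto
  qed (use Y_meas s_meas g finite_measure.integrable_const[OF borel_fin_measure_onD(2)[OF M]] in auto)
  ultimately show ?thesis
    using simple_bound[OF s Y]
    by (intro tendsto_le[OF sequentially_bot tendsto_add[OF tendsto_const tendsto_mult_left]]) auto
qed

lemma truncated_integrable:
  assumes "Y \<in> sets borel"
  shows "integrable \<mu> (\<lambda>x. indicator Y x * min \<bar>\<psi> x\<bar> (real n) powr p)"
proof (rule finite_measure.integrable_const_bound[OF borel_fin_measure_onD(2)[OF M],
      where B="real n powr p"])
  show "AE x in \<mu>. norm (indicator Y x * min \<bar>\<psi> x\<bar> (real n) powr p) \<le> real n powr p"
    using p_gt_1 by (intro AE_I2) (auto simp: indicator_def intro!: powr_mono2)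
qed (use indicator_measurable[OF assms] \<psi>_measurable in measurable)

text \<open>Testing against \<open>g = sgn \<psi> \<cdot> min |\<psi>| n^(p-1)\<close>: the truncated \<open>T = \<integral>\<^sub>Y min |\<psi>| n ^ p d\<mu>\<close>
  satisfies \<open>T \<le> \<nu>(Y)/p + T/q\<close>, hence \<open>T \<le> \<nu>(Y)\<close>.\<close>
lemma truncated_bound:
  assumes Y: "Y \<in> sets borel"
  shows "(\<integral>x. indicator Y x * min \<bar>\<psi> x\<bar> (real n) powr p \<partial>\<mu>) \<le> (\<integral>x. indicator Y x \<partial>\<nu>)"
proof -
  define g where "g x = sgn (\<psi> x) * min \<bar>\<psi> x\<bar> (real n) powr (p - 1)" for x
  define T where "T = (\<integral>x. indicator Y x * min \<bar>\<psi> x\<bar> (real n) powr p \<partial>\<mu>)"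
  have g_meas: "g \<in> borel_measurable \<mu>"
    unfolding g_def using \<psi>_measurable by measurable
  have g_bound: "\<bar>g x\<bar> \<le> real n powr (p - 1)" for x
    unfolding g_def using p_gt_1 by (auto simp: abs_mult sgn_real_def intro!: powr_mono2)
  have Y_meas: "(indicator Y :: 'a \<Rightarrow> real) \<in> borel_measurable \<mu>"
    using indicator_measurable[OF Y] .
  have "T \<le> (\<integral>x. indicator Y x * (g x * \<psi> x) \<partial>\<mu>)"
    unfolding T_def
  proof (rule integral_mono)
    show "integrable \<mu> (\<lambda>x. indicator Y x * min \<bar>\<psi> x\<bar> (real n) powr p)"
      using truncated_integrable[OF Y] .
    show "integrable \<mu> (\<lambda>x. indicator Y x * (g x * \<psi> x))"
    proof (rule Bochner_Integration.integrable_bound[OF integrable_mult_right[OF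
            integrable_abs[OF \<psi>_integrable], of "real n powr (p - 1)"]])
      show "AE x in \<mu>. norm (indicator Y x * (g x * \<psi> x)) \<le> norm (real n powr (p - 1) * \<bar>\<psi> x\<bar>)"
        using g_bound by (intro AE_I2) (auto simp: indicator_def abs_mult intro!: mult_right_mono)
    qed (use Y_meas g_meas \<psi>_measurable in measurable)
    show "indicator Y x * min \<bar>\<psi> x\<bar> (real n) powr p \<le> indicator Y x * (g x * \<psi> x)" for x
      using truncated_power_le_pairing[OF p_gt_1, of "real n" "\<psi> x"]
      unfolding g_def by (auto simp: indicator_def)
  qed
  also have "\<dots> \<le> 1/p * (\<integral>x. indicator Y x \<partial>\<nu>) + 1/q * T"
    using bounded_bound[OF g_meas g_bound Y]
    unfolding T_def g_def truncated_power_conjugate[OF of_nat_0_le_iff p_minus_1_q] .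
  finally have "(1 - 1/q) * T \<le> 1/p * (\<integral>x. indicator Y x \<partial>\<nu>)"
    by (simp add: algebra_simps)
  moreover have "1 - 1/q = 1/p"
    using conjugate by auto
  ultimately show ?thesis
    unfolding T_def using p_gt_1 by (simp add: divide_le_cancel)
qed

text \<open>Monotone convergence in \<open>n\<close> removes the truncation.\<close>
lemma Lp_bound:
  assumes X: "X \<in> sets (restrict_space borel K)"
  shows "(\<integral>\<^sup>+x. ennreal (indicator X x * \<bar>\<psi> x\<bar> powr p) \<partial>\<mu>) \<le> emeasure \<nu> X"
proof -
  have XK: "X \<subseteq> K" and X_borel: "X \<in> sets borel"
    using X sets_restrict_space_iff[of K borel] K_borel by auto
  define f where "f n x = ennreal (indicator X x * min \<bar>\<psi> x\<bar> (real n) powr p)" for n x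
  have f_meas: "f n \<in> borel_measurable \<mu>" for n
    unfolding f_def using indicator_measurable[OF X_borel] \<psi>_measurable by measurable
  have inc: "incseq f"
    using p_gt_1 unfolding f_def
    by (intro monoI le_funI ennreal_leI mult_left_mono powr_mono2) auto
  have conv: "(\<lambda>n. f n x) \<longlonglongrightarrow> ennreal (indicator X x * \<bar>\<psi> x\<bar> powr p)" for x
  proof (rule tendsto_eventually)
    obtain n0 :: nat where "\<bar>\<psi> x\<bar> \<le> real n0"
      using real_arch_simple by blast
    then have "min \<bar>\<psi> x\<bar> (real n) = \<bar>\<psi> x\<bar>" if "n0 \<le> n" for n
      using that of_nat_mono[OF that] by linarith
    then show "eventually (\<lambda>n. f n x = ennreal (indicator X x * \<bar>\<psi> x\<bar> powr p)) sequentially"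
      unfolding eventually_sequentially f_def by (auto intro!: exI[of _ n0])
  qed
  have "integral\<^sup>N \<mu> (f n) \<le> emeasure \<nu> X" for n
  proof -
    have "integral\<^sup>N \<mu> (f n) = ennreal (\<integral>x. indicator X x * min \<bar>\<psi> x\<bar> (real n) powr p \<partial>\<mu>)"
      unfolding f_def using truncated_integrable[OF X_borel]
      by (intro nn_integral_eq_integral AE_I2) auto
    also have "\<dots> \<le> ennreal (\<integral>x. indicator X x \<partial>\<nu>)"
      using truncated_bound[OF X_borel] by (rule ennreal_leI)
    also have "\<dots> = emeasure \<nu> X"
      using XK space_\<nu> finite_measure.emeasure_eq_measure[OF borel_fin_measure_onD(2)[OF N]]
      by (simp add: Int_absorb2)
    finally show ?thesis .
  qed
  then show ?thesis
    using LIMSEQ_le_const2[OF nn_integral_LIMSEQ[OF inc f_meas conv]] by blast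
qed

end

lemma weighted_Young:
  fixes c w y p q :: real
  assumes "1 < p" "1 < q" "1/p + 1/q = 1" "0 \<le> w"
  shows "c * (w * y) \<le> 1/p * (w * \<bar>y\<bar> powr p) + 1/q * \<bar>c\<bar> powr q * w"
proof -
  have "c * y \<le> \<bar>y\<bar> * \<bar>c\<bar>"
    by (simp add: abs_mult[symmetric] mult.commute)
  also have "\<dots> \<le> \<bar>y\<bar> powr p / p + \<bar>c\<bar> powr q / q"
    using assms(1-3) by (rule Youngs_inequality) auto
  finally have "w * (c * y) \<le> w * (\<bar>y\<bar> powr p / p + \<bar>c\<bar> powr q / q)"
    using assms(4) by (rule mult_left_mono)
  then show ?thesis
    by (simp add: algebra_simps)
qed

text \<open>The key limit step: integrate the weighted Young inequality against \<open>\<mu>\<^sub>j\<close> and let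
  \<open>j \<rightarrow> \<infinity>\<close>, using the three weak limits for the cut-off \<open>h\<close>.\<close>
lemma weak_limit_Young:
  fixes h :: "'a::metric_space \<Rightarrow> real"
  assumes \<mu>s: "\<And>j. borel_fin_measure_on K (\<mu>s j)" and weak: "weak_star_conv K \<mu>s \<mu>"
    and pq: "1 < p" "1 < q" "1/p + 1/q = 1" and h: "cont01 h"
    and lim_\<psi>: "(\<lambda>j. \<integral>x. h x * \<psi>s j x \<partial>\<mu>s j) \<longlonglongrightarrow> (\<integral>x. h x * \<psi> x \<partial>\<mu>)"
    and lim_pow: "(\<lambda>j. \<integral>x. h x * \<bar>\<psi>s j x\<bar> powr p \<partial>\<mu>s j) \<longlonglongrightarrow> (\<integral>x. h x \<partial>\<nu>)"
    and int: "eventually (\<lambda>j. integrable (\<mu>s j) (\<psi>s j) \<and>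
                integrable (\<mu>s j) (\<lambda>x. \<bar>\<psi>s j x\<bar> powr p)) sequentially"
  shows "c * (\<integral>x. h x * \<psi> x \<partial>\<mu>) \<le> 1/p * (\<integral>x. h x \<partial>\<nu>) + 1/q * \<bar>c\<bar> powr q * (\<integral>x. h x \<partial>\<mu>)"
proof (rule tendsto_le[OF sequentially_bot _ tendsto_mult_left[OF lim_\<psi>]])
  have lim_h: "(\<lambda>j. \<integral>x. h x \<partial>\<mu>s j) \<longlonglongrightarrow> (\<integral>x. h x \<partial>\<mu>)"
    using weak cont01D(2)[OF h] unfolding weak_star_conv_def by blast
  show "(\<lambda>j. 1/p * (\<integral>x. h x * \<bar>\<psi>s j x\<bar> powr p \<partial>\<mu>s j) + 1/q * \<bar>c\<bar> powr q * (\<integral>x. h x \<partial>\<mu>s j))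
      \<longlonglongrightarrow> 1/p * (\<integral>x. h x \<partial>\<nu>) + 1/q * \<bar>c\<bar> powr q * (\<integral>x. h x \<partial>\<mu>)"
    by (intro tendsto_intros lim_pow lim_h)
  show "\<forall>\<^sub>F j in sequentially. c * (\<integral>x. h x * \<psi>s j x \<partial>\<mu>s j)
      \<le> 1/p * (\<integral>x. h x * \<bar>\<psi>s j x\<bar> powr p \<partial>\<mu>s j) + 1/q * \<bar>c\<bar> powr q * (\<integral>x. h x \<partial>\<mu>s j)"
    using int
  proof eventually_elim
    case (elim j)
    have h_int: "integrable (\<mu>s j) h"
      using borel_fin_measure_on_integrable[OF \<mu>s cont01D(1)[OF h], of 1] cont01D(3,4)[OF h]
      by (simp add: abs_le_iff)
    have h_meas: "h \<in> borel_measurable (\<mu>s j)"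
      using borel_fin_measure_on_measurable[OF \<mu>s cont01D(1)[OF h]] .
    have int_pow: "integrable (\<mu>s j) (\<lambda>x. h x * \<bar>\<psi>s j x\<bar> powr p)"
      using elim h_meas cont01D(3,4)[OF h]
      by (intro Bochner_Integration.integrable_bound[OF conjunct2[OF elim]] AE_I2)
        (auto intro!: mult_left_le_one_le)
    have int_\<psi>: "integrable (\<mu>s j) (\<lambda>x. h x * \<psi>s j x)"
      using elim h_meas cont01D(3,4)[OF h]
      by (intro Bochner_Integration.integrable_bound[OF conjunct1[OF elim]] AE_I2)
        (auto simp: abs_mult intro!: mult_left_le_one_le)
    have "c * (\<integral>x. h x * \<psi>s j x \<partial>\<mu>s j) = (\<integral>x. c * (h x * \<psi>s j x) \<partial>\<mu>s j)"
      by simp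
    also have "\<dots> \<le> (\<integral>x. 1/p * (h x * \<bar>\<psi>s j x\<bar> powr p) + 1/q * \<bar>c\<bar> powr q * h x \<partial>\<mu>s j)"
      using int_\<psi> int_pow h_int weighted_Young[OF pq cont01D(3)[OF h]]
      by (intro integral_mono) auto
    also have "\<dots> = 1/p * (\<integral>x. h x * \<bar>\<psi>s j x\<bar> powr p \<partial>\<mu>s j) + 1/q * \<bar>c\<bar> powr q * (\<integral>x. h x \<partial>\<mu>s j)"
      using int_pow h_int by simp
    finally show ?case .
  qed
qed

lemma msupp_subset: "msupp K M \<subseteq> K"
  unfolding msupp_def by auto

text \<open>Closedness: every ball around a limit point of the support contains a smaller ball
  around a support point.\<close>
lemma msupp_closed:
  assumes "closed K" "borel_fin_measure_on K M"
  shows "closed (msupp K M)"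
  unfolding closed_limpt
proof (intro allI impI)
  fix x assume lp: "x islimpt msupp K M"
  then have "x \<in> K"
    using assms(1) msupp_subset islimpt_subset closed_limpt by blast
  moreover have "0 < emeasure M (ball x e \<inter> K)" if "e > 0" for e
  proof -
    obtain y where y: "y \<in> msupp K M" "dist y x < e/2"
      using lp \<open>e > 0\<close> unfolding islimpt_approachable by (meson half_gt_zero)
    have "0 < emeasure M (ball y (e/2) \<inter> K)"
      using y(1) \<open>e > 0\<close> unfolding msupp_def by auto
    also have "\<dots> \<le> emeasure M (ball x e \<inter> K)"
    proof (rule emeasure_mono)
      show "ball y (e/2) \<inter> K \<subseteq> ball x e \<inter> K"
        using y(2) by (auto simp: ball_def dist_commute intro: dist_triangle_half_r)
      show "ball x e \<inter> K \<in> sets M"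
        using borel_fin_measure_onD(1)[OF assms(2)] by (auto simp: sets_restrict_space)
    qed
    finally show ?thesis .
  qed
  ultimately show "x \<in> msupp K M"
    unfolding msupp_def by blast
qed

lemma msupp_sets:
  assumes "closed K" "borel_fin_measure_on K M"
  shows "msupp K M \<in> sets M"
  using msupp_closed[OF assms] msupp_subset[of K M] assms(1)
    sets_restrict_space_iff[of K borel] borel_fin_measure_onD(1)[OF assms(2)]
  by auto

text \<open>Functions defined on a measurable subset \<open>S\<close> are handled through their extension by zero.\<close>
lemma zero_extension_measurable:
  assumes "f \<in> borel_measurable (restrict_space M S)" "S \<in> sets M"
  shows "(\<lambda>x. indicator S x * f x :: real) \<in> borel_measurable M"
  using borel_measurable_restrict_space_iff[of S M f] assms
  by (simp add: Int_absorb2 sets.sets_into_space)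

lemma set_integral_zero_extension:
  "(\<integral>x\<in>S. h x * f x \<partial>M) = (\<integral>x. h x * (indicator S x * f x) \<partial>M :: real)"
  unfolding set_lebesgue_integral_def by (simp add: mult_ac)

lemma set_integral_zero_extension_powr:
  fixes f h :: "'a \<Rightarrow> real"
  assumes "0 < p"
  shows "(\<integral>x\<in>S. h x * \<bar>f x\<bar> powr p \<partial>M) = (\<integral>x. h x * \<bar>indicator S x * f x\<bar> powr p \<partial>M)"
  unfolding set_lebesgue_integral_def
  using assms by (intro Bochner_Integration.integral_cong) (auto simp: indicator_def)

text \<open>On a finite measure space a function with finite \<open>p\<close>-th moment, \<open>p \<ge> 1\<close>,
  is integrable, since \<open>|f| \<le> 1 + |f|^p\<close>.\<close>
lemma Lp_integrable:
  fixes f :: "'a \<Rightarrow> real"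
  assumes "finite_measure M" "f \<in> borel_measurable M" "1 \<le> p"
    and "(\<integral>\<^sup>+x. ennreal (\<bar>f x\<bar> powr p) \<partial>M) \<noteq> \<infinity>"
  shows "integrable M f" "integrable M (\<lambda>x. \<bar>f x\<bar> powr p)"
proof -
  show pow_int: "integrable M (\<lambda>x. \<bar>f x\<bar> powr p)"
  proof (rule integrableI_bounded)
    show "(\<lambda>x. \<bar>f x\<bar> powr p) \<in> borel_measurable M"
      using assms(2) by measurable
    show "(\<integral>\<^sup>+x. ennreal (norm (\<bar>f x\<bar> powr p)) \<partial>M) < \<infinity>"
      using assms(4) by (simp add: top.not_eq_extremum)
  qed
  have bound: "norm (f x) \<le> norm (1 + \<bar>f x\<bar> powr p)" for x
  proof (cases "\<bar>f x\<bar> \<le> 1")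
    case False
    then have "\<bar>f x\<bar> powr 1 \<le> \<bar>f x\<bar> powr p"
      using assms(3) by (intro powr_mono) auto
    then show ?thesis unfolding real_norm_def by simp
  next
    case True
    then show ?thesis
      using powr_ge_zero[of "\<bar>f x\<bar>" p] unfolding real_norm_def by arith
  qed
  have "integrable M (\<lambda>x. 1 + \<bar>f x\<bar> powr p)"
    by (intro Bochner_Integration.integrable_add finite_measure.integrable_const[OF assms(1)] pow_int)
  then show "integrable M f"
    by (rule Bochner_Integration.integrable_bound[OF _ assms(2) AE_I2[OF bound]])
qed

lemma Lp_seq_norm_eventually_integrable:
  fixes K :: "'a::metric_space set" and \<mu>s :: "nat \<Rightarrow> 'a measure"
    and \<phi> :: "nat \<Rightarrow> 'a \<Rightarrow> real"
  defines "\<psi>s \<equiv> \<lambda>j x. indicator (msupp K (\<mu>s j)) x * \<phi> j x"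
  assumes "Lp_seq_norm p K \<mu>s \<phi> < \<infinity>" "1 \<le> p"
    and "\<And>j. finite_measure (\<mu>s j)" "\<And>j. \<psi>s j \<in> borel_measurable (\<mu>s j)"
  shows "eventually (\<lambda>j. integrable (\<mu>s j) (\<psi>s j) \<and>
           integrable (\<mu>s j) (\<lambda>x. \<bar>\<psi>s j x\<bar> powr p)) sequentially"
proof -
  have "eventually (\<lambda>j. Lp_norm_on p (\<mu>s j) (msupp K (\<mu>s j)) (\<phi> j) < \<infinity>) sequentially"
    using assms(2) unfolding Lp_seq_norm_def by (intro Limsup_lessD) auto
  then show ?thesis
  proof eventually_elim
    case (elim j)
    have "(\<integral>\<^sup>+x. ennreal (\<bar>\<psi>s j x\<bar> powr p) \<partial>\<mu>s j)
        = (\<integral>\<^sup>+x\<in>msupp K (\<mu>s j). ennreal (\<bar>\<phi> j x\<bar> powr p) \<partial>\<mu>s j)"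
      using assms(3) by (intro nn_integral_cong) (auto simp: \<psi>s_def indicator_def)
    also have "\<dots> \<noteq> \<infinity>"
      using elim by (auto simp: Lp_norm_on_def Let_def split: if_splits)
    finally show ?case
      using Lp_integrable[OF assms(4,5) assms(3)] by blast
  qed
qed

lemma weak_limit_values_dual_Young_bound:
  fixes K :: "'a::metric_space set" and \<mu>s :: "nat \<Rightarrow> 'a measure" and \<mu> \<nu> :: "'a measure"
    and \<phi> :: "nat \<Rightarrow> 'a \<Rightarrow> real" and \<phi>s :: "'a \<Rightarrow> real" and p :: real
  assumes K: "closed K" and \<mu>s: "\<And>j. borel_fin_measure_on K (\<mu>s j)"
    and \<mu>: "borel_fin_measure_on K \<mu>" and \<nu>: "borel_fin_measure_on K \<nu>"
    and weak: "weak_star_conv K \<mu>s \<mu>" and p: "1 < p"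
    and wlv: "has_weak_limit_values K \<mu>s \<mu> \<phi> \<phi>s" and norm: "Lp_seq_norm p K \<mu>s \<phi> < \<infinity>"
    and lim_supp: "\<And>h. continuous_on K h \<Longrightarrow>
      (\<lambda>j. \<integral>x\<in>msupp K (\<mu>s j). h x * \<bar>\<phi> j x\<bar> powr p \<partial>\<mu>s j) \<longlonglongrightarrow> (\<integral>x. h x \<partial>\<nu>)"
  shows "dual_Young_bound K \<mu> \<nu> (\<lambda>x. indicator (msupp K \<mu>) x * \<phi>s x) p (p / (p - 1))"
proof -
  define \<psi> where "\<psi> x = indicator (msupp K \<mu>) x * \<phi>s x" for x
  define \<psi>s where "\<psi>s j x = indicator (msupp K (\<mu>s j)) x * \<phi> j x" for j x
  have \<psi>s_meas: "\<psi>s j \<in> borel_measurable (\<mu>s j)" for j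
    using wlv msupp_sets[OF K \<mu>s] unfolding \<psi>s_def has_weak_limit_values_def
    by (blast intro: zero_extension_measurable)
  have lim_\<psi>: "(\<lambda>j. \<integral>x. h x * \<psi>s j x \<partial>\<mu>s j) \<longlonglongrightarrow> (\<integral>x. h x * \<psi> x \<partial>\<mu>)"
    if "continuous_on K h" for h
    using wlv that unfolding has_weak_limit_values_def set_integral_zero_extension \<psi>_def \<psi>s_def
    by blast
  have lim_pow: "(\<lambda>j. \<integral>x. h x * \<bar>\<psi>s j x\<bar> powr p \<partial>\<mu>s j) \<longlonglongrightarrow> (\<integral>x. h x \<partial>\<nu>)"
    if "continuous_on K h" for h
    using lim_supp[OF that] p unfolding \<psi>s_def by (simp add: set_integral_zero_extension_powr)
  have \<psi>s_int: "eventually (\<lambda>j. integrable (\<mu>s j) (\<psi>s j) \<and>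
      integrable (\<mu>s j) (\<lambda>x. \<bar>\<psi>s j x\<bar> powr p)) sequentially"
    using Lp_seq_norm_eventually_integrable[OF norm _ borel_fin_measure_onD(2)[OF \<mu>s]]
      \<psi>s_meas p unfolding \<psi>s_def by simp
  have pq: "1 < p / (p - 1)" "1/p + 1/(p / (p - 1)) = 1"
    using p by (auto simp: field_simps)
  show ?thesis
    unfolding \<psi>_def[symmetric]
  proof
    show "integrable \<mu> \<psi>"
      using wlv unfolding has_weak_limit_values_def set_integrable_def \<psi>_def by simp
    show "c * (\<integral>x. h x * \<psi> x \<partial>\<mu>)
        \<le> 1/p * (\<integral>x. h x \<partial>\<nu>) + 1/(p / (p - 1)) * \<bar>c\<bar> powr (p / (p - 1)) * (\<integral>x. h x \<partial>\<mu>)"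
      if "cont01 h" for h c
      using cont01D(2)[OF that]
      by (intro weak_limit_Young[OF \<mu>s weak p pq that _ _ \<psi>s_int] lim_\<psi> lim_pow)
  qed (use \<mu> \<nu> p pq K in auto)
qed

theorem theorem2p2:
  fixes K :: "'a::metric_space set"
    and \<mu>s :: "nat \<Rightarrow> 'a measure" and \<mu> \<nu> :: "'a measure"
    and \<phi> :: "nat \<Rightarrow> 'a \<Rightarrow> real" and \<phi>s :: "'a \<Rightarrow> real" and p :: real
  assumes "compact K"
    and "\<And>j. borel_fin_measure_on K (\<mu>s j)"
    and "borel_fin_measure_on K \<mu>"
    and "weak_star_conv K \<mu>s \<mu>"
    and "p > 1"
    and "has_weak_limit_values K \<mu>s \<mu> \<phi> \<phi>s"
    and "Lp_seq_norm p K \<mu>s \<phi> < \<infinity>"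
    and "borel_fin_measure_on K \<nu>"
    and "\<And>h::'a \<Rightarrow> real. continuous_on K h \<Longrightarrow>
           (\<lambda>j. \<integral>x\<in>msupp K (\<mu>s j). h x * \<bar>\<phi> j x\<bar> powr p \<partial>(\<mu>s j)) \<longlonglongrightarrow> (\<integral>x. h x \<partial>\<nu>)"
  shows "\<forall>X \<in> sets (restrict_space borel K).
           (\<integral>\<^sup>+x\<in>X \<inter> msupp K \<mu>. ennreal (\<bar>\<phi>s x\<bar> powr p) \<partial>\<mu>) \<le> emeasure \<nu> X"
proof
  interpret dual_Young_bound K \<mu> \<nu> "\<lambda>x. indicator (msupp K \<mu>) x * \<phi>s x" p "p / (p - 1)"
    using weak_limit_values_dual_Young_bound[OF compact_imp_closed[OF assms(1)] assms(2,3,8,4,5,6,7,9)] .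
  fix X assume X: "X \<in> sets (restrict_space borel K)"
  have "(\<integral>\<^sup>+x\<in>X \<inter> msupp K \<mu>. ennreal (\<bar>\<phi>s x\<bar> powr p) \<partial>\<mu>)
      = (\<integral>\<^sup>+x. ennreal (indicator X x * \<bar>indicator (msupp K \<mu>) x * \<phi>s x\<bar> powr p) \<partial>\<mu>)"
    using assms(5) by (intro nn_integral_cong) (auto simp: indicator_def)
  then show "(\<integral>\<^sup>+x\<in>X \<inter> msupp K \<mu>. ennreal (\<bar>\<phi>s x\<bar> powr p) \<partial>\<mu>) \<le> emeasure \<nu> X"
    using Lp_bound[OF X] by simp
qed

end
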